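(* Every packet name $\dot x_{\mathfrak S}$ arising from a rank-$1$ packet scheme $\mathfrak S=(A,\langle\mathcal C_m:m<\omega\rangle)$ is hereditarily symmetric and is supported by $A$.
   Context: $\rho:\omega_1\setminus\{0\}\to\omega_1$ is the generic regressive map added by finite partial regressive functions; $\operatorname{Succ}_\rho(\xi)=\{\eta:\rho(\eta)=\xi\}$; $A$ is $\rho$-closed if closed under $\rho$, $\operatorname{cl}_\rho(A)$ the least $\rho$-closed superset. $\mathbb P_1=\operatorname{Fn}(\omega_1\times\omega\times\omega,2,{<}\omega)$. For $\xi<\omega_1,i<\omega$, $s\subseteq\omega$ finite or cofinite, $\tau^{\mathrm{1cas}}_{\xi,i,s}$ flips the value of a condition at each coordinate $(\zeta,i,n)$ with $n\in s$ and $\zeta\in\{\xi\}\cup\operatorname{Succ}_\rho(\xi)$; $\mathscr G^{\mathrm{1cas}}_\rho$ is the group they generate; $\operatorname{Fix}^{\mathrm{1cas}}_\rho(A)$ is the subgroup acting trivially on coordinates $(\zeta,j,n)$ with $\zeta\in\operatorname{cl}_\rho(A)$; $\mathscr F^{\mathrm{1cas}}_\rho$ is the filter of subgroups generated by these for countable $A$; hereditarily symmetric names are taken with respect to $(\mathbb P_1,\mathscr G^{\mathrm{1cas}}_\rho,\mathscr F^{\mathrm{1cas}}_\rho)$, and a name is supported by $A$ if fixed by $\operatorname{Fix}^{\mathrm{1cas}}_\rho(A)$. An exact finite cascade packet is a condition $r\in\mathbb P_1$ whose node-support $\{\xi:\exists i,n\ r(\xi,i,n)\text{ defined}\}$ is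 finite and $\rho$-closed. A rank-$1$ packet scheme is a pair $\mathfrak S=(A,\langle\mathcal C_m:m<\omega\rangle)$ with $A\subseteq\omega_1$ countable and $\rho$-closed and each $\mathcal C_m$ a countable family of exact finite cascade packets with node-support contained in $A$; its name is $\dot x_{\mathfrak S}=\{(\check m,r):m<\omega,\ r\in\mathcal C_m\}$. *)

theory Defs
  imports Main "HOL-Library.Countable_Set_Type"
begin

text \<open>omega_1 is modelled by a well-ordered type 'w that is uncountable but all of
whose proper initial segments are countable. Its least element plays the role of 0.\<close>

definition omega1_like :: "'w::wellorder itself \<Rightarrow> bool" where
  "omega1_like _ \<longleftrightarrow> \<not> countable (UNIV :: 'w set) \<and> (\<forall>\<xi>::'w. countable {\<eta>. \<eta> < \<xi>})"

definition zero_ord :: "'w::wellorder" where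
  "zero_ord = (LEAST x. True)"

text \<open>rho is only meaningful on omega_1 minus {0}; its value at 0 is ignored everywhere.\<close>
definition regressive :: "('w::wellorder \<Rightarrow> 'w) \<Rightarrow> bool" where
  "regressive \<rho> \<longleftrightarrow> (\<forall>\<xi>. \<xi> \<noteq> zero_ord \<longrightarrow> \<rho> \<xi> < \<xi>)"

definition Succ :: "('w::wellorder \<Rightarrow> 'w) \<Rightarrow> 'w \<Rightarrow> 'w set" where
  "Succ \<rho> \<xi> = {\<eta>. \<eta> \<noteq> zero_ord \<and> \<rho> \<eta> = \<xi>}"

definition rho_closed :: "('w::wellorder \<Rightarrow> 'w) \<Rightarrow> 'w set \<Rightarrow> bool" where
  "rho_closed \<rho> A \<longleftrightarrow> (\<forall>\<eta>\<in>A. \<eta> \<noteq> zero_ord \<longrightarrow> \<rho> \<eta> \<in> A)"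

definition cl_rho :: "('w::wellorder \<Rightarrow> 'w) \<Rightarrow> 'w set \<Rightarrow> 'w set" where
  "cl_rho \<rho> A = \<Inter>{B. A \<subseteq> B \<and> rho_closed \<rho> B}"

type_synonym 'w cond = "'w \<times> nat \<times> nat \<Rightarrow> bool option"

definition P1 :: "'w cond set" where
  "P1 = {p. finite (dom p)}"

definition one_cond :: "'w cond" where
  "one_cond = Map.empty"

definition tau1cas :: "('w::wellorder \<Rightarrow> 'w) \<Rightarrow> 'w \<Rightarrow> nat \<Rightarrow> nat set \<Rightarrow> 'w cond \<Rightarrow> 'w cond" where
  "tau1cas \<rho> \<xi> i s p = (\<lambda>(\<zeta>, j, n).
      if j = i \<and> n \<in> s \<and> \<zeta> \<in> insert \<xi> (Succ \<rho> \<xi>)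
      then map_option Not (p (\<zeta>, j, n)) else p (\<zeta>, j, n))"

definition gens1cas :: "('w::wellorder \<Rightarrow> 'w) \<Rightarrow> ('w cond \<Rightarrow> 'w cond) set" where
  "gens1cas \<rho> = {tau1cas \<rho> \<xi> i s | \<xi> i s. finite s \<or> finite (- s)}"

inductive_set G1cas :: "('w::wellorder \<Rightarrow> 'w) \<Rightarrow> ('w cond \<Rightarrow> 'w cond) set"
  for \<rho> where
  gen: "\<tau> \<in> gens1cas \<rho> \<Longrightarrow> \<tau> \<in> G1cas \<rho>"
| ident: "id \<in> G1cas \<rho>"
| comp: "\<pi> \<in> G1cas \<rho> \<Longrightarrow> \<sigma> \<in> G1cas \<rho> \<Longrightarrow> \<pi> \<circ> \<sigma> \<in> G1cas \<rho>"
| inverse: "\<pi> \<in> G1cas \<rho> \<Longrightarrow> inv \<pi> \<in> G1cas \<rho>"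

definition Fix1cas :: "('w::wellorder \<Rightarrow> 'w) \<Rightarrow> 'w set \<Rightarrow> ('w cond \<Rightarrow> 'w cond) set" where
  "Fix1cas \<rho> A = {\<pi> \<in> G1cas \<rho>. \<forall>p \<zeta> j n. \<zeta> \<in> cl_rho \<rho> A \<longrightarrow> \<pi> p (\<zeta>, j, n) = p (\<zeta>, j, n)}"

definition is_subgroup :: "('w::wellorder \<Rightarrow> 'w) \<Rightarrow> ('w cond \<Rightarrow> 'w cond) set \<Rightarrow> bool" where
  "is_subgroup \<rho> H \<longleftrightarrow> H \<subseteq> G1cas \<rho> \<and> id \<in> H \<and> (\<forall>\<pi>\<in>H. \<forall>\<sigma>\<in>H. \<pi> \<circ> \<sigma> \<in> H)
     \<and> (\<forall>\<pi>\<in>H. inv \<pi> \<in> H)"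

definition F1cas :: "('w::wellorder \<Rightarrow> 'w) \<Rightarrow> ('w cond \<Rightarrow> 'w cond) set set" where
  "F1cas \<rho> = {H. is_subgroup \<rho> H \<and>
      (\<exists>As. finite As \<and> (\<forall>A\<in>As. countable A) \<and> G1cas \<rho> \<inter> \<Inter>(Fix1cas \<rho> ` As) \<subseteq> H)}"

text \<open>Names whose elements form countable sets (sufficient for the names considered:
hereditary symmetry only depends on the transitive closure of a name).\<close>
datatype 'c name = Name (elts: "('c name \<times> 'c) cset")

primrec act :: "('c \<Rightarrow> 'c) \<Rightarrow> 'c name \<Rightarrow> 'c name" where
  "act \<pi> (Name X) = Name (cimage (map_prod (act \<pi>) \<pi>) X)"

definition symmetric_name :: "('w::wellorder \<Rightarrow> 'w) \<Rightarrow> 'w cond name \<Rightarrow> bool" where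
  "symmetric_name \<rho> x \<longleftrightarrow> {\<pi> \<in> G1cas \<rho>. act \<pi> x = x} \<in> F1cas \<rho>"

inductive HS :: "('w::wellorder \<Rightarrow> 'w) \<Rightarrow> 'w cond name \<Rightarrow> bool" for \<rho> where
  "symmetric_name \<rho> x \<Longrightarrow> (\<forall>(y, p) \<in> rcset (elts x). p \<in> P1 \<and> HS \<rho> y) \<Longrightarrow> HS \<rho> x"

definition supported_by :: "('w::wellorder \<Rightarrow> 'w) \<Rightarrow> 'w set \<Rightarrow> 'w cond name \<Rightarrow> bool" where
  "supported_by \<rho> A x \<longleftrightarrow> (\<forall>\<pi> \<in> Fix1cas \<rho> A. act \<pi> x = x)"

primrec check_nat :: "nat \<Rightarrow> 'w cond name" where
  "check_nat 0 = Name cempty"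
| "check_nat (Suc n) = Name (cinsert (check_nat n, one_cond) (elts (check_nat n)))"

definition node_support :: "'w cond \<Rightarrow> 'w set" where
  "node_support r = {\<xi>. \<exists>i n. r (\<xi>, i, n) \<noteq> None}"

definition exact_packet :: "('w::wellorder \<Rightarrow> 'w) \<Rightarrow> 'w cond \<Rightarrow> bool" where
  "exact_packet \<rho> r \<longleftrightarrow> r \<in> P1 \<and> finite (node_support r) \<and> rho_closed \<rho> (node_support r)"

definition rank1_scheme :: "('w::wellorder \<Rightarrow> 'w) \<Rightarrow> 'w set \<Rightarrow> (nat \<Rightarrow> 'w cond set) \<Rightarrow> bool" where
  "rank1_scheme \<rho> A C \<longleftrightarrow> countable A \<and> rho_closed \<rho> A \<and>
     (\<forall>m. countable (C m) \<and> (\<forall>r \<in> C m. exact_packet \<rho> r \<and> node_support r \<subseteq> A))"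

definition scheme_name :: "(nat \<Rightarrow> 'w cond set) \<Rightarrow> 'w cond name" where
  "scheme_name C = Name (acset (\<Union>m. (\<lambda>r. (check_nat m, r)) ` C m))"

end

theory Submission
  imports Defs
begin

text \<open>Every generator flips the truth values on a fixed set of coordinates, so the whole group
  consists of such flips: it is Boolean and never changes the domain of a condition. Hence an
  element of Fix(A) fixes every condition whose domain lies over A, in particular every packet of
  the scheme, and it fixes every check name; so it fixes the packet name. A name supported by a
  countable set is symmetric, and the check names occurring in the packet name are hereditarily
  symmetric for the same reason.\<close>

definition flip :: "('w \<times> nat \<times> nat) set \<Rightarrow> 'w cond \<Rightarrow> 'w cond" where
  "flip S p = (\<lambda>x. if x \<in> S then map_option Not (p x) else p x)"

lemma flip_comp: "flip S \<circ> flip T = flip ((S - T) \<union> (T - S))"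
  by (auto simp: fun_eq_iff flip_def option.map_comp o_def option.map_ident)

lemma flip_flip: "flip S \<circ> flip S = id"
  by (auto simp: fun_eq_iff flip_def option.map_comp o_def option.map_ident)

lemma inv_flip: "inv (flip S) = flip S"
  by (metis flip_flip inv_unique_comp)

lemma flip_outside_dom: "p x = None \<Longrightarrow> flip S p x = p x"
  by (simp add: flip_def)

lemma G1cas_obtain_flip:
  assumes "\<pi> \<in> G1cas \<rho>"
  obtains S where "\<pi> = flip S"
proof -
  from assms have "\<exists>S. \<pi> = flip S"
  proof (induction rule: G1cas.induct)
    case (gen \<tau>)
    then obtain \<xi> i s where "\<tau> = tau1cas \<rho> \<xi> i s" unfolding gens1cas_def by blast
    then have "\<tau> = flip {(\<zeta>, j, n). j = i \<and> n \<in> s \<and> \<zeta> \<in> insert \<xi> (Succ \<rho> \<xi>)}"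
      by (auto simp: tau1cas_def flip_def fun_eq_iff)
    then show ?case ..
  next
    case ident
    have "id = flip {}" by (simp add: flip_def fun_eq_iff)
    then show ?case ..
  next
    case (comp \<pi> \<sigma>)
    then show ?case by (metis flip_comp)
  next
    case (inverse \<pi>)
    then show ?case by (metis inv_flip)
  qed
  then show thesis using that by blast
qed

lemma G1cas_inv_self: "\<pi> \<in> G1cas \<rho> \<Longrightarrow> inv \<pi> = \<pi>"
  by (metis G1cas_obtain_flip inv_flip)

lemma G1cas_fixes_outside_dom: "\<pi> \<in> G1cas \<rho> \<Longrightarrow> p x = None \<Longrightarrow> \<pi> p x = p x"
  by (metis G1cas_obtain_flip flip_outside_dom)

lemma G1cas_fixes_one_cond: "\<pi> \<in> G1cas \<rho> \<Longrightarrow> \<pi> one_cond = one_cond"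
  using G1cas_fixes_outside_dom by (fastforce simp: one_cond_def)

lemma subset_cl_rho: "A \<subseteq> cl_rho \<rho> A"
  unfolding cl_rho_def by auto

lemma Fix1cas_fixes_cond:
  fixes r :: "'w::wellorder cond"
  assumes "\<pi> \<in> Fix1cas \<rho> A" and "node_support r \<subseteq> A"
  shows "\<pi> r = r"
proof
  fix x :: "'w \<times> nat \<times> nat"
  obtain \<zeta> j n where x: "x = (\<zeta>, j, n)" by (cases x) auto
  show "\<pi> r x = r x"
  proof (cases "\<zeta> \<in> cl_rho \<rho> A")
    case True
    then show ?thesis using assms(1) x by (simp add: Fix1cas_def)
  next
    case False
    then have "r x = None"
      using assms(2) subset_cl_rho x unfolding node_support_def by blast
    then show ?thesis using assms(1) G1cas_fixes_outside_dom[of \<pi> \<rho> r x] by (simp add: Fix1cas_def)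
  qed
qed

lemma act_comp: "act (\<pi> \<circ> \<sigma>) x = act \<pi> (act \<sigma> x)"
proof (induction x)
  case (Name X)
  have "cimage (map_prod (act (\<pi> \<circ> \<sigma>)) (\<pi> \<circ> \<sigma>)) X
      = cimage (map_prod (act \<pi>) \<pi> \<circ> map_prod (act \<sigma>) \<sigma>) X"
    by (rule cset.map_cong0) (use Name in \<open>fastforce simp: map_prod_def o_def split: prod.splits\<close>)
  then show ?case by (simp add: cset.map_comp[symmetric] del: comp_apply)
qed

lemma act_Name_acset_fixed:
  assumes "countable U" and "\<And>y p. (y, p) \<in> U \<Longrightarrow> act \<pi> y = y \<and> \<pi> p = p"
  shows "act \<pi> (Name (acset U)) = Name (acset U)"
proof -
  have "\<forall>u\<in>U. map_prod (act \<pi>) \<pi> u = u"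
    using assms(2) by auto
  then have "rcset (cimage (map_prod (act \<pi>) \<pi>) (acset U)) = rcset (acset U)"
    using assms(1) by (simp add: cimage.rep_eq)
  then show ?thesis by (simp add: rcset_inject)
qed

lemma act_id: "act id x = x"
proof (induction x)
  case (Name X)
  have "cimage (map_prod (act id) id) X = cimage id X"
    by (rule cset.map_cong0) (use Name in \<open>auto simp: map_prod_def id_def split: prod.splits\<close>)
  then show ?case by (simp only: act.simps cset.map_id)
qed

lemma stabilizer_is_subgroup: "is_subgroup \<rho> {\<pi> \<in> G1cas \<rho>. act \<pi> x = x}"
  unfolding is_subgroup_def by (auto simp: act_comp act_id G1cas_inv_self intro: G1cas.intros)

lemma symmetric_if_supported_by_countable:
  assumes "countable A" and "supported_by \<rho> A x"
  shows "symmetric_name \<rho> x"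
  unfolding symmetric_name_def F1cas_def
proof (intro CollectI conjI exI[of _ "{A}"])
  show "G1cas \<rho> \<inter> \<Inter> (Fix1cas \<rho> ` {A}) \<subseteq> {\<pi> \<in> G1cas \<rho>. act \<pi> x = x}"
    using assms(2) by (auto simp: supported_by_def)
qed (use assms(1) stabilizer_is_subgroup in auto)

lemma rcset_elts_check_nat:
  "rcset (elts (check_nat n)) = (\<lambda>k. (check_nat k, one_cond)) ` {..<n}"
  by (induction n) (auto simp: cinsert.rep_eq bot_cset.rep_eq lessThan_Suc)

lemma check_nat_eq: "check_nat n = Name (acset ((\<lambda>k. (check_nat k, one_cond)) ` {..<n}))"
  by (metis rcset_elts_check_nat rcset_inverse name.collapse)

lemma G1cas_fixes_check_nat:
  assumes "\<pi> \<in> G1cas \<rho>"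
  shows "act \<pi> (check_nat n) = check_nat n"
proof (induction n rule: less_induct)
  case (less n)
  show ?case
    by (subst (1 2) check_nat_eq, rule act_Name_acset_fixed)
       (auto simp: less G1cas_fixes_one_cond[OF assms])
qed

lemma HS_check_nat: "HS \<rho> (check_nat n)"
proof (induction n rule: less_induct)
  case (less n)
  have "supported_by \<rho> {} (check_nat n)"
    by (auto simp: supported_by_def Fix1cas_def G1cas_fixes_check_nat)
  then have "symmetric_name \<rho> (check_nat n)"
    by (rule symmetric_if_supported_by_countable[OF countable_empty])
  then show ?case
    by (rule HS.intros) (auto simp: rcset_elts_check_nat less P1_def one_cond_def)
qed

lemma rcset_elts_scheme_name:
  assumes "\<And>m. countable (C m)"
  shows "rcset (elts (scheme_name C)) = (\<Union>m. (\<lambda>r. (check_nat m, r)) ` C m)"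
  using assms by (simp add: scheme_name_def)

lemma scheme_name_supported_by:
  assumes "\<And>m. countable (C m)" and "\<And>m r. r \<in> C m \<Longrightarrow> node_support r \<subseteq> A"
  shows "supported_by \<rho> A (scheme_name C)"
  unfolding supported_by_def
proof
  fix \<pi> assume \<pi>: "\<pi> \<in> Fix1cas \<rho> A"
  then have "\<pi> \<in> G1cas \<rho>" by (simp add: Fix1cas_def)
  then show "act \<pi> (scheme_name C) = scheme_name C"
    unfolding scheme_name_def
    using assms Fix1cas_fixes_cond[OF \<pi>] G1cas_fixes_check_nat
    by (intro act_Name_acset_fixed) auto
qed

theorem proposition4p3:
  fixes \<rho> :: "'w::wellorder \<Rightarrow> 'w"
    and A :: "'w set"
    and C :: "nat \<Rightarrow> 'w cond set"
  assumes "omega1_like TYPE('w)"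
    and "regressive \<rho>"
    and "rank1_scheme \<rho> A C"
  shows "HS \<rho> (scheme_name C) \<and> supported_by \<rho> A (scheme_name C)"
proof -
  have A: "countable A" and C: "\<And>m. countable (C m)"
    and packets: "\<And>m r. r \<in> C m \<Longrightarrow> exact_packet \<rho> r \<and> node_support r \<subseteq> A"
    using assms(3) by (auto simp: rank1_scheme_def)
  have supported: "supported_by \<rho> A (scheme_name C)"
    using C packets by (blast intro: scheme_name_supported_by)
  have "HS \<rho> (scheme_name C)"
  proof (rule HS.intros)
    show "symmetric_name \<rho> (scheme_name C)"
      using A supported by (rule symmetric_if_supported_by_countable)
    show "\<forall>(y, p) \<in> rcset (elts (scheme_name C)). p \<in> P1 \<and> HS \<rho> y"
      using packets by (auto simp: rcset_elts_scheme_name[OF C] exact_packet_def HS_check_nat)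
  qed
  then show ?thesis using supported ..
qed

end
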